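(* Suppose $\min\{d_1,\dots,d_{L-1}\}\ge d_{\min}$, and: if $L=2$, $\lambda\ne y_i^2$ for all $i\in[r_Y]$; if $L\ge3$, $\lambda\ne y_i^{2(L-1)}\big((\tfrac{L-2}{L})^{\frac{L}{2(L-1)}}+(\tfrac{L}{L-2})^{\frac{L-2}{2(L-1)}}\big)^{-2(L-1)}$ for all $i\in[r_Y]$. Let $\mu:=\min\{\min_{i\in[r_Y]}|\lambda-y_i^2|,\ \lambda\}$ and $$(\epsilon_0,\kappa_0)=\begin{cases}\Big(\big(\tfrac{\sqrt\lambda\,\mu}{2(\sqrt\lambda+y_1)}\big)^{1/2},\ \tfrac{2(\sqrt\lambda+y_1)}{\sqrt\lambda\,\mu}\Big),&L=2,\\[1ex] \Big(\min\big\{(\lambda/3)^{1/(2L-2)},\ (\sqrt\lambda/(3y_1))^{1/(L-2)}\big\},\ \tfrac{3\sqrt L}{2\lambda}\Big),&L\ge3.\end{cases}$$ Then for all $\bm W=(\bm W_1,\dots,\bm W_L)$ with $(\sum_l\|\bm W_l\|_F^2)^{1/2}\le\epsilon_0$, $$\Big(\sum_{l=1}^L\|\bm W_l\|_F^2\Big)^{1/2}\le\kappa_0\|\nabla G(\bm W)\|_F.$$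
   Context: Let $L\ge2$, $d_0,\dots,d_L$ positive integers, $d_{\min}=\min\{d_0,d_L\}$, $\lambda>0$, $y_1\ge\dots\ge y_{d_{\min}}\ge0$, $r_Y$ the number of positive $y_i$, and $\bm Y\in\mathbb R^{d_L\times d_0}$ the matrix with $(i,i)$ entry $y_i$ for $i\le d_{\min}$ and zeros elsewhere. For $\bm W=(\bm W_1,\dots,\bm W_L)$, $\bm W_l\in\mathbb R^{d_l\times d_{l-1}}$, $G(\bm W)=\|\bm W_L\cdots\bm W_1-\sqrt\lambda\bm Y\|_F^2+\lambda\sum_l\|\bm W_l\|_F^2$, and $\|\nabla G(\bm W)\|_F=(\sum_l\|\nabla_{\bm W_l}G(\bm W)\|_F^2)^{1/2}$. (If $y_1=0$ and $L\ge3$, the second term in the minimum defining $\epsilon_0$ is interpreted as $+\infty$.) *)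

theory Defs
  imports "HOL-Analysis.Analysis"
begin

text \<open>Matrices of varying sizes are represented as functions nat => nat => real,
  only entries (i,j) with i < rows, j < cols being meaningful (0-indexed).
  A tuple W = (W_1,...,W_L) is a function nat => (nat => nat => real), W l being
  the d l x d (l-1) matrix W_l.  Singular values y are 1-indexed: y 1 >= y 2 >= ...\<close>

type_synonym mat = "nat \<Rightarrow> nat \<Rightarrow> real"

fun chainW :: "(nat \<Rightarrow> nat) \<Rightarrow> (nat \<Rightarrow> mat) \<Rightarrow> nat \<Rightarrow> mat" where
  "chainW d W 0 = (\<lambda>i j. if i = j then 1 else 0)"
| "chainW d W (Suc k) = (\<lambda>i j. \<Sum>m<d k. W (Suc k) i m * chainW d W k m j)"

definition dmin :: "(nat \<Rightarrow> nat) \<Rightarrow> nat \<Rightarrow> nat" where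
  "dmin d L = min (d 0) (d L)"

definition Ymat :: "(nat \<Rightarrow> nat) \<Rightarrow> nat \<Rightarrow> (nat \<Rightarrow> real) \<Rightarrow> mat" where
  "Ymat d L y = (\<lambda>i j. if i = j \<and> i < dmin d L then y (Suc i) else 0)"

definition rY :: "(nat \<Rightarrow> nat) \<Rightarrow> nat \<Rightarrow> (nat \<Rightarrow> real) \<Rightarrow> nat" where
  "rY d L y = card {i \<in> {1..dmin d L}. y i > 0}"

definition sqnormW :: "(nat \<Rightarrow> nat) \<Rightarrow> nat \<Rightarrow> (nat \<Rightarrow> mat) \<Rightarrow> real" where
  "sqnormW d L W = (\<Sum>l\<in>{1..L}. \<Sum>i<d l. \<Sum>j<d (l - 1). (W l i j)\<^sup>2)"

definition Gfun :: "(nat \<Rightarrow> nat) \<Rightarrow> nat \<Rightarrow> real \<Rightarrow> (nat \<Rightarrow> real) \<Rightarrow> (nat \<Rightarrow> mat) \<Rightarrow> real" where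
  "Gfun d L lam y W =
     (\<Sum>i<d L. \<Sum>j<d 0. (chainW d W L i j - sqrt lam * Ymat d L y i j)\<^sup>2)
     + lam * sqnormW d L W"

definition perturbW :: "(nat \<Rightarrow> mat) \<Rightarrow> nat \<Rightarrow> nat \<Rightarrow> nat \<Rightarrow> real \<Rightarrow> (nat \<Rightarrow> mat)" where
  "perturbW W l i j t = W(l := (W l)(i := (W l i)(j := W l i j + t)))"

definition gradG :: "(nat \<Rightarrow> nat) \<Rightarrow> nat \<Rightarrow> real \<Rightarrow> (nat \<Rightarrow> real) \<Rightarrow> (nat \<Rightarrow> mat) \<Rightarrow> nat \<Rightarrow> mat" where
  "gradG d L lam y W l i j = deriv (\<lambda>t. Gfun d L lam y (perturbW W l i j t)) 0"

definition gradnormG :: "(nat \<Rightarrow> nat) \<Rightarrow> nat \<Rightarrow> real \<Rightarrow> (nat \<Rightarrow> real) \<Rightarrow> (nat \<Rightarrow> mat) \<Rightarrow> real" where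
  "gradnormG d L lam y W =
     sqrt (\<Sum>l\<in>{1..L}. \<Sum>i<d l. \<Sum>j<d (l - 1). (gradG d L lam y W l i j)\<^sup>2)"

text \<open>mu = min { min_{i in [r_Y]} |lam - y_i^2|, lam }; the inner min over the empty set is +infinity.\<close>
definition muval :: "(nat \<Rightarrow> nat) \<Rightarrow> nat \<Rightarrow> real \<Rightarrow> (nat \<Rightarrow> real) \<Rightarrow> real" where
  "muval d L lam y =
     (if rY d L y = 0 then lam
      else min (Min ((\<lambda>i. \<bar>lam - (y i)\<^sup>2\<bar>) ` {1..rY d L y})) lam)"

definition eps0 :: "(nat \<Rightarrow> nat) \<Rightarrow> nat \<Rightarrow> real \<Rightarrow> (nat \<Rightarrow> real) \<Rightarrow> real" where
  "eps0 d L lam y =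
     (if L = 2 then
        sqrt (sqrt lam * muval d L lam y / (2 * (sqrt lam + y 1)))
      else if y 1 = 0 then (lam / 3) powr (1 / (2 * real L - 2))
      else min ((lam / 3) powr (1 / (2 * real L - 2)))
               ((sqrt lam / (3 * y 1)) powr (1 / (real L - 2))))"

definition kappa0 :: "(nat \<Rightarrow> nat) \<Rightarrow> nat \<Rightarrow> real \<Rightarrow> (nat \<Rightarrow> real) \<Rightarrow> real" where
  "kappa0 d L lam y =
     (if L = 2 then 2 * (sqrt lam + y 1) / (sqrt lam * muval d L lam y)
      else 3 * sqrt (real L) / (2 * lam))"

text \<open>Excluded value of lam for L >= 3.\<close>
definition crit :: "nat \<Rightarrow> real \<Rightarrow> real" where
  "crit L yi = yi ^ (2 * (L - 1)) *
     (((real L - 2) / real L) powr (real L / (2 * (real L - 1)))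
      + (real L / (real L - 2)) powr ((real L - 2) / (2 * (real L - 1)))) powr (- (2 * (real L - 1)))"

end

theory Submission
  imports Defs
begin

text \<open>
  For L \<ge> 3 the gradient of G is, near 0, dominated by the weight-decay term 2 lam W.
  Pairing grad G(W) with W and using Euler's identity for the L-homogeneous product
  C = W_L \<cdots> W_1 gives 2 lam |W|^2 + 2 L |C|^2 - 2 L sqrt lam tr(Y^T C); by
  Cauchy-Schwarz and AM-GM the trace is at most y_1 (|W|^2 / L)^(L/2), which is at most a
  third of the main term once |W| \<le> eps0.  For L = 2 the part of grad G(W) that is linear
  in W decouples into 2 x 2 blocks [[lam, -sqrt lam y_i], [-sqrt lam y_i, lam]], whose
  singular values are at least sqrt lam mu / (sqrt lam + y_1), while the cubic remainder is
  at most |W|^3.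
\<close>

section \<open>Frobenius norm estimates\<close>

definition frob_sq :: "nat \<Rightarrow> nat \<Rightarrow> mat \<Rightarrow> real" where
  "frob_sq m n A = (\<Sum>i<m. \<Sum>j<n. (A i j)\<^sup>2)"

definition mat_mult :: "nat \<Rightarrow> mat \<Rightarrow> mat \<Rightarrow> mat" where
  "mat_mult p A B = (\<lambda>i j. \<Sum>k<p. A i k * B k j)"

lemma frob_sq_nonneg: "0 \<le> frob_sq m n A"
  unfolding frob_sq_def by (intro sum_nonneg) auto

lemma frob_sq_transpose: "frob_sq n m (\<lambda>i j. A j i) = frob_sq m n A"
  unfolding frob_sq_def by (rule sum.swap)

lemma frob_sq_mono: "m \<le> m' \<Longrightarrow> n \<le> n' \<Longrightarrow> frob_sq m n A \<le> frob_sq m' n' A"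
proof -
  assume "m \<le> m'" "n \<le> n'"
  then have "frob_sq m n A \<le> (\<Sum>i<m. \<Sum>j<n'. (A i j)\<^sup>2)"
    unfolding frob_sq_def by (intro sum_mono sum_mono2) auto
  also have "\<dots> \<le> frob_sq m' n' A"
    unfolding frob_sq_def using \<open>m \<le> m'\<close> by (intro sum_mono2 sum_nonneg) auto
  finally show ?thesis .
qed

lemma frob_sq_mat_mult_le: "frob_sq m n (mat_mult p A B) \<le> frob_sq m p A * frob_sq p n B"
proof -
  have "frob_sq m n (mat_mult p A B) \<le> (\<Sum>i<m. \<Sum>j<n. (\<Sum>k<p. (A i k)\<^sup>2) * (\<Sum>k<p. (B k j)\<^sup>2))"
    unfolding frob_sq_def mat_mult_def by (intro sum_mono Cauchy_Schwarz_ineq_sum)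
  also have "\<dots> = (\<Sum>i<m. \<Sum>k<p. (A i k)\<^sup>2) * (\<Sum>j<n. \<Sum>k<p. (B k j)\<^sup>2)"
    by (rule sum_product[symmetric])
  also have "\<dots> = frob_sq m p A * frob_sq n p (\<lambda>i j. B j i)"
    unfolding frob_sq_def ..
  also have "\<dots> = frob_sq m p A * frob_sq p n B"
    by (simp only: frob_sq_transpose[of n p B])
  finally show ?thesis .
qed

lemma trace_abs_mat_mult_le:
  "(\<Sum>i<m. \<bar>mat_mult p A B i i\<bar>)\<^sup>2 \<le> frob_sq m p A * frob_sq p m B"
proof -
  have pairs: "(\<Sum>i<m. \<Sum>k<p. f i k) = (\<Sum>x\<in>{..<m} \<times> {..<p}. f (fst x) (snd x))"
    for f :: "nat \<Rightarrow> nat \<Rightarrow> real"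
    by (simp add: sum.cartesian_product split_beta)
  have "\<bar>mat_mult p A B i i\<bar> \<le> (\<Sum>k<p. \<bar>A i k\<bar> * \<bar>B k i\<bar>)" for i
    unfolding mat_mult_def using sum_abs[of "\<lambda>k. A i k * B k i" "{..<p}"] by (simp add: abs_mult)
  then have "(\<Sum>i<m. \<bar>mat_mult p A B i i\<bar>) \<le> (\<Sum>i<m. \<Sum>k<p. \<bar>A i k\<bar> * \<bar>B k i\<bar>)"
    by (intro sum_mono)
  then have "(\<Sum>i<m. \<bar>mat_mult p A B i i\<bar>)\<^sup>2 \<le> (\<Sum>i<m. \<Sum>k<p. \<bar>A i k\<bar> * \<bar>B k i\<bar>)\<^sup>2"
    by (intro power_mono sum_nonneg) auto
  also have "\<dots> \<le> (\<Sum>i<m. \<Sum>k<p. \<bar>A i k\<bar>\<^sup>2) * (\<Sum>i<m. \<Sum>k<p. \<bar>B k i\<bar>\<^sup>2)"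
    unfolding pairs by (rule Cauchy_Schwarz_ineq_sum)
  also have "\<dots> = frob_sq m p A * frob_sq p m B"
    using frob_sq_transpose[of m p B] by (simp add: frob_sq_def)
  finally show ?thesis .
qed

lemma prod_le_mean_power:
  fixes x :: "'a \<Rightarrow> real"
  assumes "finite S" "S \<noteq> {}" "\<And>i. i \<in> S \<Longrightarrow> 0 \<le> x i"
  shows "(\<Prod>i\<in>S. x i) \<le> ((\<Sum>i\<in>S. x i) / card S) ^ card S"
proof -
  define P where "P = (\<Prod>i\<in>S. x i)"
  have n: "card S > 0" using assms by (simp add: card_gt_0_iff)
  have P0: "0 \<le> P" unfolding P_def using assms by (intro prod_nonneg) auto
  have "P powr (1 / card S) \<le> (\<Sum>i\<in>S. x i) / card S"
    using arith_geom_mean[OF assms] by (simp add: P_def sum_divide_distrib)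
  then have "(P powr (1 / card S)) ^ card S \<le> ((\<Sum>i\<in>S. x i) / card S) ^ card S"
    by (intro power_mono) auto
  also have "(P powr (1 / card S)) ^ card S = P"
  proof (cases "P = 0")
    case False
    then have "(P powr (1 / card S)) ^ card S = (P powr (1 / card S)) powr card S"
      using P0 by (simp add: powr_realpow)
    also have "\<dots> = P" using n P0 by (simp add: powr_powr)
    finally show ?thesis .
  qed (use n in simp)
  finally show ?thesis unfolding P_def .
qed

text \<open>The matrix [[lam, -c], [-c, lam]] has singular values lam + c and |lam - c|.\<close>

lemma block_2x2_lower_bound:
  fixes lam c K a b :: real
  assumes "0 \<le> lam" "0 \<le> c" "K\<^sup>2 \<le> (lam - c)\<^sup>2"
  shows "K\<^sup>2 * (a\<^sup>2 + b\<^sup>2) \<le> (lam * a - c * b)\<^sup>2 + (lam * b - c * a)\<^sup>2"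
proof -
  have "K\<^sup>2 * (a\<^sup>2 + b\<^sup>2) \<le> (lam - c)\<^sup>2 * (a\<^sup>2 + b\<^sup>2)"
    using assms(3) by (intro mult_right_mono) auto
  also have "\<dots> \<le> (lam - c)\<^sup>2 * (a\<^sup>2 + b\<^sup>2) + 2 * lam * c * (a - b)\<^sup>2"
    using assms(1,2) by simp
  also have "\<dots> = (lam * a - c * b)\<^sup>2 + (lam * b - c * a)\<^sup>2"
    by (simp add: power2_eq_square algebra_simps)
  finally show ?thesis .
qed

lemma sum_lessThan_split:
  fixes f :: "nat \<Rightarrow> 'a::comm_monoid_add"
  assumes "M \<le> N"
  shows "(\<Sum>j<N. f j) = (\<Sum>j<M. f j) + (\<Sum>j\<in>{M..<N}. f j)"
  using sum.atLeastLessThan_concat[of 0 M N f] assms by (simp add: atLeast0LessThan)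

lemma block_2x2_sum_lower_bound:
  fixes a b c :: "nat \<Rightarrow> real"
  assumes "0 \<le> lam" "\<forall>j. 0 \<le> c j" "\<forall>j. K\<^sup>2 \<le> (lam - c j)\<^sup>2"
    and "M \<le> n" "M \<le> m" "\<forall>j\<ge>M. c j = 0"
  shows "K\<^sup>2 * ((\<Sum>j<n. (a j)\<^sup>2) + (\<Sum>j<m. (b j)\<^sup>2))
    \<le> (\<Sum>j<n. (lam * a j - c j * b j)\<^sup>2) + (\<Sum>j<m. (lam * b j - c j * a j)\<^sup>2)"
proof -
  have paired: "(\<Sum>j<M. K\<^sup>2 * ((a j)\<^sup>2 + (b j)\<^sup>2)) \<le> (\<Sum>j<M. (lam * a j - c j * b j)\<^sup>2 + (lam * b j - c j * a j)\<^sup>2)"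
    using assms(1-3) by (intro sum_mono block_2x2_lower_bound) auto
  have "K\<^sup>2 * (a j)\<^sup>2 \<le> (lam * a j - c j * b j)\<^sup>2" "K\<^sup>2 * (b j)\<^sup>2 \<le> (lam * b j - c j * a j)\<^sup>2"
    if "M \<le> j" for j
  proof -
    have "K\<^sup>2 \<le> lam\<^sup>2"
      using assms(3,6) that by (metis diff_zero)
    then show "K\<^sup>2 * (a j)\<^sup>2 \<le> (lam * a j - c j * b j)\<^sup>2" "K\<^sup>2 * (b j)\<^sup>2 \<le> (lam * b j - c j * a j)\<^sup>2"
      using assms(6) that by (auto simp: power_mult_distrib intro: mult_right_mono)
  qed
  then have "(\<Sum>j\<in>{M..<n}. K\<^sup>2 * (a j)\<^sup>2) \<le> (\<Sum>j\<in>{M..<n}. (lam * a j - c j * b j)\<^sup>2)"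
    "(\<Sum>j\<in>{M..<m}. K\<^sup>2 * (b j)\<^sup>2) \<le> (\<Sum>j\<in>{M..<m}. (lam * b j - c j * a j)\<^sup>2)"
    by (auto intro: sum_mono)
  with paired show ?thesis
    unfolding sum_lessThan_split[OF assms(4)] sum_lessThan_split[OF assms(5)]
    by (simp add: sum_distrib_left sum.distrib algebra_simps)
qed

lemma linear_part_lower_bound:
  fixes A B :: mat and c :: "nat \<Rightarrow> real"
  assumes "0 \<le> lam" "\<forall>j. 0 \<le> c j" "\<forall>j. K\<^sup>2 \<le> (lam - c j)\<^sup>2"
    and "M \<le> n" "M \<le> m" "\<forall>j\<ge>M. c j = 0"
  shows "K\<^sup>2 * (frob_sq p n A + frob_sq m p B)
    \<le> (\<Sum>i<p. \<Sum>j<n. (lam * A i j - c j * B j i)\<^sup>2) + (\<Sum>i<m. \<Sum>j<p. (lam * B i j - c i * A j i)\<^sup>2)"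
proof -
  have "K\<^sup>2 * (frob_sq p n A + frob_sq m p B)
      = (\<Sum>i<p. K\<^sup>2 * ((\<Sum>j<n. (A i j)\<^sup>2) + (\<Sum>j<m. (B j i)\<^sup>2)))"
    unfolding frob_sq_transpose[of p m B, symmetric]
    by (simp add: frob_sq_def sum_distrib_left distrib_left sum.distrib)
  also have "\<dots> \<le> (\<Sum>i<p. (\<Sum>j<n. (lam * A i j - c j * B j i)\<^sup>2) + (\<Sum>j<m. (lam * B j i - c j * A i j)\<^sup>2))"
    using assms by (intro sum_mono block_2x2_sum_lower_bound) auto
  also have "\<dots> = (\<Sum>i<p. \<Sum>j<n. (lam * A i j - c j * B j i)\<^sup>2) + (\<Sum>i<p. \<Sum>j<m. (lam * B j i - c j * A i j)\<^sup>2)"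
    by (rule sum.distrib)
  also have "(\<Sum>i<p. \<Sum>j<m. (lam * B j i - c j * A i j)\<^sup>2) = (\<Sum>i<m. \<Sum>j<p. (lam * B i j - c i * A j i)\<^sup>2)"
    by (rule sum.swap)
  finally show ?thesis .
qed

lemma cubic_part_upper_bound:
  fixes A B :: mat and m n p :: nat
  defines "C \<equiv> mat_mult p B A"
  shows "4 * (frob_sq p n (mat_mult m (\<lambda>i k. B k i) C) + frob_sq m p (mat_mult n C (\<lambda>k j. A j k)))
    \<le> (frob_sq p n A + frob_sq m p B) ^ 3"
proof -
  define a b where "a = frob_sq p n A" and "b = frob_sq m p B"
  have a0: "0 \<le> a" and b0: "0 \<le> b" unfolding a_def b_def by (simp_all add: frob_sq_nonneg)
  have "frob_sq p n (mat_mult m (\<lambda>i k. B k i) C) \<le> b * frob_sq m n C"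
    using frob_sq_mat_mult_le[of p n m "\<lambda>i k. B k i" C, unfolded frob_sq_transpose[of p m B]]
    unfolding b_def .
  moreover have "frob_sq m p (mat_mult n C (\<lambda>k j. A j k)) \<le> frob_sq m n C * a"
    using frob_sq_mat_mult_le[of m p n C "\<lambda>k j. A j k", unfolded frob_sq_transpose[of n p A]]
    unfolding a_def .
  ultimately have "frob_sq p n (mat_mult m (\<lambda>i k. B k i) C) + frob_sq m p (mat_mult n C (\<lambda>k j. A j k))
      \<le> frob_sq m n C * (a + b)"
    by (simp add: algebra_simps)
  also have "\<dots> \<le> (a * b) * (a + b)"
    using a0 b0 frob_sq_mat_mult_le[of m n p B A] unfolding C_def a_def b_def
    by (intro mult_right_mono) (auto simp: mult.commute)
  finally have "4 * (frob_sq p n (mat_mult m (\<lambda>i k. B k i) C) + frob_sq m p (mat_mult n C (\<lambda>k j. A j k)))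
      \<le> 4 * (a * b) * (a + b)"
    by simp
  also have "\<dots> \<le> (a + b)\<^sup>2 * (a + b)"
    using a0 b0 sum_squares_ge_zero[of "a - b" 0] by (intro mult_right_mono) (auto simp: power2_eq_square algebra_simps)
  finally show ?thesis
    unfolding a_def b_def by (simp add: power2_eq_square power3_eq_cube)
qed

section \<open>The gradient of G\<close>

lemma sum_layers_product:
  fixes d :: "nat \<Rightarrow> nat" and f :: "nat \<Rightarrow> nat \<Rightarrow> nat \<Rightarrow> real"
  assumes "finite A"
  shows "(\<Sum>l\<in>A. \<Sum>i<d l. \<Sum>j<d (l - 1). f l i j)
    = (\<Sum>x\<in>(SIGMA l:A. {..<d l} \<times> {..<d (l - 1)}). f (fst x) (fst (snd x)) (snd (snd x)))"
  using assms by (simp add: sum.Sigma sum.cartesian_product split_beta)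

lemma sum_layers_Cauchy_Schwarz:
  fixes d :: "nat \<Rightarrow> nat" and a b :: "nat \<Rightarrow> nat \<Rightarrow> nat \<Rightarrow> real"
  assumes "finite A"
  shows "(\<Sum>l\<in>A. \<Sum>i<d l. \<Sum>j<d (l - 1). a l i j * b l i j)\<^sup>2
    \<le> (\<Sum>l\<in>A. \<Sum>i<d l. \<Sum>j<d (l - 1). (a l i j)\<^sup>2) * (\<Sum>l\<in>A. \<Sum>i<d l. \<Sum>j<d (l - 1). (b l i j)\<^sup>2)"
  unfolding sum_layers_product[where d=d, OF assms] by (rule Cauchy_Schwarz_ineq_sum)

lemma sum_layers_sqrt_add_le:
  fixes d :: "nat \<Rightarrow> nat" and a b :: "nat \<Rightarrow> nat \<Rightarrow> nat \<Rightarrow> real"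
  assumes "finite A"
  shows "sqrt (\<Sum>l\<in>A. \<Sum>i<d l. \<Sum>j<d (l - 1). (a l i j + b l i j)\<^sup>2)
    \<le> sqrt (\<Sum>l\<in>A. \<Sum>i<d l. \<Sum>j<d (l - 1). (a l i j)\<^sup>2) + sqrt (\<Sum>l\<in>A. \<Sum>i<d l. \<Sum>j<d (l - 1). (b l i j)\<^sup>2)"
  unfolding sum_layers_product[where d=d, OF assms]
  using L2_set_triangle_ineq[of "\<lambda>x. a (fst x) (fst (snd x)) (snd (snd x))" "\<lambda>x. b (fst x) (fst (snd x)) (snd (snd x))"]
  unfolding L2_set_def by simp

lemma sum_layers_swap:
  fixes d :: "nat \<Rightarrow> nat" and f :: "nat \<Rightarrow> nat \<Rightarrow> nat \<Rightarrow> 'b \<Rightarrow> real"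
  shows "(\<Sum>l\<in>A. \<Sum>i<d l. \<Sum>j<d (l - 1). \<Sum>p\<in>P. f l i j p) = (\<Sum>p\<in>P. \<Sum>l\<in>A. \<Sum>i<d l. \<Sum>j<d (l - 1). f l i j p)"
proof -
  have "(\<Sum>l\<in>A. \<Sum>i<d l. \<Sum>j<d (l - 1). \<Sum>p\<in>P. f l i j p) = (\<Sum>l\<in>A. \<Sum>p\<in>P. \<Sum>i<d l. \<Sum>j<d (l - 1). f l i j p)"
    by (intro sum.cong refl) (simp add: sum.swap[of _ P])
  also have "\<dots> = (\<Sum>p\<in>P. \<Sum>l\<in>A. \<Sum>i<d l. \<Sum>j<d (l - 1). f l i j p)"
    by (rule sum.swap)
  finally show ?thesis .
qed

lemma sum_layers_delta:
  fixes d :: "nat \<Rightarrow> nat"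
  assumes "finite A" "l \<in> A" "i < d l" "j < d (l - 1)"
  shows "(\<Sum>l'\<in>A. \<Sum>m<d l'. \<Sum>p<d (l' - 1). if l' = l \<and> m = i \<and> p = j then c else 0) = (c :: real)"
proof -
  have "(\<Sum>l'\<in>A. \<Sum>m<d l'. \<Sum>p<d (l' - 1). if l' = l \<and> m = i \<and> p = j then c else 0)
     = (\<Sum>l'\<in>A. if l' = l then (\<Sum>m<d l'. \<Sum>p<d (l' - 1). if m = i \<and> p = j then c else 0) else 0)"
    by (rule sum.cong) auto
  also have "\<dots> = (\<Sum>m<d l. \<Sum>p<d (l - 1). if m = i \<and> p = j then c else 0)"
    using assms by (simp add: sum.delta)
  also have "\<dots> = (\<Sum>m<d l. if m = i then (\<Sum>p<d (l - 1). if p = j then c else 0) else 0)"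
    by (rule sum.cong) auto
  also have "\<dots> = c"
    using assms by (simp add: sum.delta)
  finally show ?thesis .
qed

lemma sqnormW_eq_sum_frob_sq: "sqnormW d L W = (\<Sum>l\<in>{1..L}. frob_sq (d l) (d (l - 1)) (W l))"
  unfolding sqnormW_def frob_sq_def ..

lemma chainW_Suc_eq_mat_mult: "chainW d W (Suc k) = mat_mult (d k) (W (Suc k)) (chainW d W k)"
  by (simp add: mat_mult_def)

lemma chainW_one: "n < d 0 \<Longrightarrow> chainW d W 1 m n = W 1 m n"
  by (simp add: if_distrib sum.delta cong: if_cong)

lemma frob_sq_chainW_le_prod:
  assumes "1 \<le> k"
  shows "frob_sq (d k) (d 0) (chainW d W k) \<le> (\<Prod>l\<in>{1..k}. frob_sq (d l) (d (l - 1)) (W l))"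
  using assms
proof (induction k rule: dec_induct)
  case base
  have "frob_sq (d 1) (d 0) (chainW d W 1) = frob_sq (d 1) (d 0) (W 1)"
    unfolding frob_sq_def by (intro sum.cong refl) (simp only: lessThan_iff chainW_one)
  then show ?case by simp
next
  case (step k)
  have "frob_sq (d (Suc k)) (d 0) (chainW d W (Suc k))
      \<le> frob_sq (d (Suc k)) (d k) (W (Suc k)) * frob_sq (d k) (d 0) (chainW d W k)"
    unfolding chainW_Suc_eq_mat_mult by (rule frob_sq_mat_mult_le)
  also have "\<dots> \<le> frob_sq (d (Suc k)) (d k) (W (Suc k)) * (\<Prod>l\<in>{1..k}. frob_sq (d l) (d (l - 1)) (W l))"
    using step.IH by (intro mult_left_mono frob_sq_nonneg)
  also have "\<dots> = (\<Prod>l\<in>{1..Suc k}. frob_sq (d l) (d (l - 1)) (W l))"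
    using step.hyps by (simp add: prod.cl_ivl_Suc)
  finally show ?case .
qed

lemma perturbW_apply:
  "perturbW W l i j t l' m p = W l' m p + (if l' = l \<and> m = i \<and> p = j then t else 0)"
  by (simp add: perturbW_def)

fun dchainW :: "(nat \<Rightarrow> nat) \<Rightarrow> (nat \<Rightarrow> mat) \<Rightarrow> nat \<Rightarrow> nat \<Rightarrow> nat \<Rightarrow> nat \<Rightarrow> mat" where
  "dchainW d W l i j 0 = (\<lambda>m n. 0)"
| "dchainW d W l i j (Suc k) = (\<lambda>m n. (if Suc k = l \<and> m = i \<and> j < d k then chainW d W k j n else 0)
      + (\<Sum>p<d k. W (Suc k) m p * dchainW d W l i j k p n))"

lemma dchainW_below: "k < l \<Longrightarrow> dchainW d W l i j k m n = 0"
  by (induction k arbitrary: m n) auto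

lemma chainW_perturbW:
  "chainW d (perturbW W l i j t) k m n = chainW d W k m n + t * dchainW d W l i j k m n"
proof (induction k arbitrary: m n)
  case 0
  show ?case by simp
next
  case (Suc k)
  define \<delta> where "\<delta> p = (if Suc k = l \<and> m = i \<and> p = j then t else 0)" for p
  have "chainW d (perturbW W l i j t) (Suc k) m n
      = (\<Sum>p<d k. (W (Suc k) m p + \<delta> p) * (chainW d W k p n + t * dchainW d W l i j k p n))"
    by (simp add: Suc.IH perturbW_apply \<delta>_def)
  also have "\<dots> = (\<Sum>p<d k. W (Suc k) m p * chainW d W k p n)
      + t * (\<Sum>p<d k. W (Suc k) m p * dchainW d W l i j k p n)
      + (\<Sum>p<d k. \<delta> p * (chainW d W k p n + t * dchainW d W l i j k p n))"
    by (simp add: algebra_simps sum.distrib sum_distrib_left)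
  also have "(\<Sum>p<d k. \<delta> p * (chainW d W k p n + t * dchainW d W l i j k p n))
      = (if Suc k = l \<and> m = i \<and> j < d k then t * chainW d W k j n else 0)"
  proof -
    have "(\<Sum>p<d k. \<delta> p * (chainW d W k p n + t * dchainW d W l i j k p n))
      = (\<Sum>p<d k. if p = j then (if Suc k = l \<and> m = i then t * (chainW d W k p n + t * dchainW d W l i j k p n) else 0) else 0)"
      unfolding \<delta>_def by (rule sum.cong) auto
    then show ?thesis
      using dchainW_below[of k l d W i j j n] by (simp add: sum.delta)
  qed
  finally show ?case by (simp add: algebra_simps)
qed

lemma sqnormW_perturbW:
  assumes "l \<in> {1..L}" "i < d l" "j < d (l - 1)"
  shows "sqnormW d L (perturbW W l i j t) = sqnormW d L W + (2 * t * W l i j + t\<^sup>2)"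
proof -
  have square: "(perturbW W l i j t l' m p)\<^sup>2
      = (W l' m p)\<^sup>2 + (if l' = l \<and> m = i \<and> p = j then 2 * t * W l i j + t\<^sup>2 else 0)" for l' m p
    by (auto simp: perturbW_apply power2_eq_square algebra_simps)
  show ?thesis
    unfolding sqnormW_def square sum.distrib using sum_layers_delta[of "{1..L}" l i d j] assms by simp
qed

lemma gradG_eq:
  assumes "l \<in> {1..L}" "i < d l" "j < d (l - 1)"
  shows "gradG d L lam y W l i j
    = 2 * (\<Sum>m<d L. \<Sum>n<d 0. (chainW d W L m n - sqrt lam * Ymat d L y m n) * dchainW d W l i j L m n)
      + 2 * lam * W l i j"
proof -
  have "((\<lambda>t. Gfun d L lam y (perturbW W l i j t)) has_real_derivative
     (\<Sum>m<d L. \<Sum>n<d 0. 2 * ((chainW d W L m n - sqrt lam * Ymat d L y m n) * dchainW d W l i j L m n))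
     + lam * (2 * W l i j)) (at 0)"
    unfolding Gfun_def sqnormW_perturbW[OF assms] chainW_perturbW
    by (auto intro!: derivative_eq_intros sum.cong simp: power2_eq_square algebra_simps)
  then show ?thesis
    unfolding gradG_def by (simp add: DERIV_imp_deriv sum_distrib_left)
qed

text \<open>Euler's identity: W_k \<cdots> W_1 is homogeneous of degree one in each of the k layers.\<close>

lemma sum_layers_mult_dchainW:
  "m < d k \<Longrightarrow> (\<Sum>l\<in>{1..k}. \<Sum>i<d l. \<Sum>j<d (l - 1). W l i j * dchainW d W l i j k m n)
    = real k * chainW d W k m n"
proof (induction k arbitrary: m n)
  case 0
  then show ?case by simp
next
  case (Suc k)
  define F where "F l = (\<Sum>i<d l. \<Sum>j<d (l - 1). W l i j * dchainW d W l i j (Suc k) m n)" for l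
  have "(\<Sum>l\<in>{1..k}. F l)
      = (\<Sum>l\<in>{1..k}. \<Sum>i<d l. \<Sum>j<d (l - 1). \<Sum>p<d k. W (Suc k) m p * (W l i j * dchainW d W l i j k p n))"
    unfolding F_def by (intro sum.cong refl) (auto simp: sum_distrib_left algebra_simps)
  also have "\<dots> = (\<Sum>p<d k. \<Sum>l\<in>{1..k}. \<Sum>i<d l. \<Sum>j<d (l - 1). W (Suc k) m p * (W l i j * dchainW d W l i j k p n))"
    by (rule sum_layers_swap)
  also have "\<dots> = (\<Sum>p<d k. W (Suc k) m p * (\<Sum>l\<in>{1..k}. \<Sum>i<d l. \<Sum>j<d (l - 1). W l i j * dchainW d W l i j k p n))"
    by (simp add: sum_distrib_left)
  also have "\<dots> = real k * chainW d W (Suc k) m n"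
    using Suc.IH by (simp add: sum_distrib_left algebra_simps)
  finally have lower: "(\<Sum>l\<in>{1..k}. F l) = real k * chainW d W (Suc k) m n" .
  have "F (Suc k) = (\<Sum>i<d (Suc k). \<Sum>j<d k. if i = m then W (Suc k) m j * chainW d W k j n else 0)"
    unfolding F_def by (intro sum.cong refl) (auto simp: dchainW_below)
  also have "\<dots> = chainW d W (Suc k) m n"
    using Suc.prems by (simp add: sum.swap[of _ "{..<d k}"] sum.delta)
  finally have top: "F (Suc k) = chainW d W (Suc k) m n" .
  show ?case
    using lower top unfolding F_def[symmetric] by (simp add: sum.cl_ivl_Suc algebra_simps)
qed

lemma sum_layers_gradG_mult_W:
  "(\<Sum>l\<in>{1..L}. \<Sum>i<d l. \<Sum>j<d (l - 1). gradG d L lam y W l i j * W l i j)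
   = 2 * lam * sqnormW d L W
     + 2 * real L * (\<Sum>m<d L. \<Sum>n<d 0. (chainW d W L m n - sqrt lam * Ymat d L y m n) * chainW d W L m n)"
proof -
  define X where "X m n = chainW d W L m n - sqrt lam * Ymat d L y m n" for m n
  have "(\<Sum>l\<in>{1..L}. \<Sum>i<d l. \<Sum>j<d (l - 1). gradG d L lam y W l i j * W l i j)
    = (\<Sum>l\<in>{1..L}. \<Sum>i<d l. \<Sum>j<d (l - 1).
         2 * (\<Sum>m<d L. \<Sum>n<d 0. X m n * (W l i j * dchainW d W l i j L m n)) + 2 * lam * (W l i j)\<^sup>2)"
    by (intro sum.cong refl) (auto simp: gradG_eq X_def algebra_simps power2_eq_square sum_distrib_left)
  also have "\<dots> = 2 * (\<Sum>l\<in>{1..L}. \<Sum>i<d l. \<Sum>j<d (l - 1). \<Sum>m<d L. \<Sum>n<d 0. X m n * (W l i j * dchainW d W l i j L m n))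
      + 2 * lam * sqnormW d L W"
    by (simp add: sum.distrib sum_distrib_left sqnormW_def)
  also have "(\<Sum>l\<in>{1..L}. \<Sum>i<d l. \<Sum>j<d (l - 1). \<Sum>m<d L. \<Sum>n<d 0. X m n * (W l i j * dchainW d W l i j L m n))
     = (\<Sum>m<d L. \<Sum>l\<in>{1..L}. \<Sum>i<d l. \<Sum>j<d (l - 1). \<Sum>n<d 0. X m n * (W l i j * dchainW d W l i j L m n))"
    by (rule sum_layers_swap)
  also have "\<dots> = (\<Sum>m<d L. \<Sum>n<d 0. \<Sum>l\<in>{1..L}. \<Sum>i<d l. \<Sum>j<d (l - 1). X m n * (W l i j * dchainW d W l i j L m n))"
    by (intro sum.cong refl sum_layers_swap)
  also have "\<dots> = (\<Sum>m<d L. \<Sum>n<d 0. X m n *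
        (\<Sum>l\<in>{1..L}. \<Sum>i<d l. \<Sum>j<d (l - 1). W l i j * dchainW d W l i j L m n))"
    by (simp add: sum_distrib_left)
  also have "\<dots> = (\<Sum>m<d L. \<Sum>n<d 0. X m n * (real L * chainW d W L m n))"
    by (intro sum.cong refl) (simp only: lessThan_iff sum_layers_mult_dchainW)
  finally show ?thesis
    unfolding X_def by (simp add: sum_distrib_left algebra_simps)
qed

lemma Ymat_diag_eq_0: "\<not> n < dmin d L \<Longrightarrow> Ymat d L y n n = 0"
  by (simp add: Ymat_def)

lemma sum_Ymat_row: "(\<Sum>n<d 0. Ymat d L y m n * f n) = Ymat d L y m m * f m"
proof -
  have "(\<Sum>n<d 0. Ymat d L y m n * f n) = (\<Sum>n<d 0. if n = m then Ymat d L y m m * f m else 0)"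
    by (intro sum.cong refl) (simp add: Ymat_def)
  also have "\<dots> = Ymat d L y m m * f m"
    using Ymat_diag_eq_0[of m d L y] by (auto simp: dmin_def sum.delta)
  finally show ?thesis .
qed

lemma sum_Ymat_col: "(\<Sum>m<d L. Ymat d L y m n * f m) = Ymat d L y n n * f n"
proof -
  have "(\<Sum>m<d L. Ymat d L y m n * f m) = (\<Sum>m<d L. if m = n then Ymat d L y n n * f n else 0)"
    by (intro sum.cong refl) (simp add: Ymat_def)
  also have "\<dots> = Ymat d L y n n * f n"
    using Ymat_diag_eq_0[of n d L y] by (auto simp: dmin_def sum.delta)
  finally show ?thesis .
qed

lemma Ymat_diag_bounds:
  assumes mono: "\<forall>i j. 1 \<le> i \<longrightarrow> i \<le> j \<longrightarrow> j \<le> dmin d L \<longrightarrow> y j \<le> y i"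
    and nonneg: "\<forall>i\<in>{1..dmin d L}. y i \<ge> 0" and "0 \<le> y 1"
  shows "0 \<le> Ymat d L y n n" "Ymat d L y n n \<le> y 1"
proof -
  have "0 \<le> y (Suc n) \<and> y (Suc n) \<le> y 1" if "n < dmin d L"
    using that mono[rule_format, of 1 "Suc n"] nonneg by auto
  then show "0 \<le> Ymat d L y n n" "Ymat d L y n n \<le> y 1"
    using \<open>0 \<le> y 1\<close> by (auto simp: Ymat_def)
qed

section \<open>Depth at least three\<close>

lemma abs_sum_Ymat_mult_le:
  assumes mono: "\<forall>i j. 1 \<le> i \<longrightarrow> i \<le> j \<longrightarrow> j \<le> dmin d L \<longrightarrow> y j \<le> y i"
    and nonneg: "\<forall>i\<in>{1..dmin d L}. y i \<ge> 0" and "0 \<le> y 1"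
  shows "\<bar>\<Sum>m<d L. \<Sum>n<d 0. Ymat d L y m n * C m n\<bar> \<le> y 1 * (\<Sum>m<dmin d L. \<bar>C m m\<bar>)"
proof -
  have "(\<Sum>m<d L. \<Sum>n<d 0. Ymat d L y m n * C m n) = (\<Sum>m<d L. Ymat d L y m m * C m m)"
    by (simp add: sum_Ymat_row)
  also have "\<dots> = (\<Sum>m<dmin d L. Ymat d L y m m * C m m)"
    by (rule sum.mono_neutral_right) (auto simp: dmin_def Ymat_diag_eq_0)
  finally have "\<bar>\<Sum>m<d L. \<Sum>n<d 0. Ymat d L y m n * C m n\<bar> \<le> (\<Sum>m<dmin d L. \<bar>Ymat d L y m m\<bar> * \<bar>C m m\<bar>)"
    by (simp add: abs_mult order_trans[OF sum_abs])
  also have "\<dots> \<le> (\<Sum>m<dmin d L. y 1 * \<bar>C m m\<bar>)"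
    using Ymat_diag_bounds[OF assms] by (intro sum_mono mult_right_mono) auto
  finally show ?thesis by (simp add: sum_distrib_left)
qed

lemma diag_chainW_sq_le_mean_power:
  assumes "2 \<le> L"
  shows "(\<Sum>m<dmin d L. \<bar>chainW d W L m m\<bar>)\<^sup>2 \<le> (sqnormW d L W / real L) ^ L"
proof -
  define M where "M = dmin d L"
  obtain k where L: "L = Suc k" and k: "1 \<le> k" using assms by (cases L) auto
  have "(\<Sum>m<M. \<bar>chainW d W L m m\<bar>)\<^sup>2 \<le> frob_sq M (d k) (W L) * frob_sq (d k) M (chainW d W k)"
    unfolding L chainW_Suc_eq_mat_mult by (rule trace_abs_mat_mult_le)
  also have "\<dots> \<le> frob_sq (d L) (d k) (W L) * frob_sq (d k) (d 0) (chainW d W k)"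
    unfolding M_def dmin_def by (intro mult_mono frob_sq_mono frob_sq_nonneg) auto
  also have "\<dots> \<le> frob_sq (d L) (d k) (W L) * (\<Prod>l\<in>{1..k}. frob_sq (d l) (d (l - 1)) (W l))"
    using k by (intro mult_left_mono frob_sq_chainW_le_prod frob_sq_nonneg)
  also have "\<dots> = (\<Prod>l\<in>{1..L}. frob_sq (d l) (d (l - 1)) (W l))"
    unfolding L by (simp add: prod.cl_ivl_Suc)
  also have "\<dots> \<le> (sqnormW d L W / real L) ^ L"
    using prod_le_mean_power[of "{1..L}" "\<lambda>l. frob_sq (d l) (d (l - 1)) (W l)"] assms
    by (simp add: sqnormW_eq_sum_frob_sq frob_sq_nonneg)
  finally show ?thesis
    unfolding M_def .
qed

lemma Ymat_chainW_cross_term_le: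
  assumes "2 \<le> L"
    and mono: "\<forall>i j. 1 \<le> i \<longrightarrow> i \<le> j \<longrightarrow> j \<le> dmin d L \<longrightarrow> y j \<le> y i"
    and nonneg: "\<forall>i\<in>{1..dmin d L}. y i \<ge> 0" and "0 \<le> y 1"
  shows "real L * (\<Sum>m<d L. \<Sum>n<d 0. Ymat d L y m n * chainW d W L m n) \<le> y 1 * sqrt (sqnormW d L W) ^ L"
proof -
  define S where "S = sqnormW d L W"
  define tr where "tr = (\<Sum>m<dmin d L. \<bar>chainW d W L m m\<bar>)"
  have S0: "0 \<le> S" unfolding S_def sqnormW_eq_sum_frob_sq by (intro sum_nonneg frob_sq_nonneg)
  have "(real L * tr)\<^sup>2 \<le> (real L)\<^sup>2 * (S / real L) ^ L"
    using diag_chainW_sq_le_mean_power[OF assms(1), of d W]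
    unfolding tr_def S_def by (simp add: power_mult_distrib mult_left_mono)
  also have "\<dots> = S ^ L * ((real L)\<^sup>2 / real L ^ L)"
    by (simp add: power_divide)
  also have "\<dots> \<le> S ^ L"
    using assms(1) S0 by (intro mult_left_le) (auto intro: power_increasing)
  also have "\<dots> = (sqrt S ^ L)\<^sup>2"
    using S0 by (simp add: real_sqrt_power[symmetric])
  finally have "real L * tr \<le> sqrt S ^ L"
    by (rule power2_le_imp_le) (simp add: S0)
  have "real L * (\<Sum>m<d L. \<Sum>n<d 0. Ymat d L y m n * chainW d W L m n) \<le> real L * (y 1 * tr)"
    using abs_sum_Ymat_mult_le[OF mono nonneg \<open>0 \<le> y 1\<close>, of "chainW d W L"] unfolding tr_def
    by (intro mult_left_mono) auto
  also have "\<dots> = y 1 * (real L * tr)"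
    by (simp add: algebra_simps)
  also have "\<dots> \<le> y 1 * sqrt S ^ L"
    using \<open>real L * tr \<le> sqrt S ^ L\<close> \<open>0 \<le> y 1\<close> by (rule mult_left_mono)
  finally show ?thesis
    unfolding S_def .
qed

lemma gradnormG_nonneg: "0 \<le> gradnormG d L lam y W"
  unfolding gradnormG_def by (simp add: sum_nonneg)

lemma sum_layers_gradG_mult_W_le:
  "(\<Sum>l\<in>{1..L}. \<Sum>i<d l. \<Sum>j<d (l - 1). gradG d L lam y W l i j * W l i j)
    \<le> gradnormG d L lam y W * sqrt (sqnormW d L W)"
proof -
  have "(\<Sum>l\<in>{1..L}. \<Sum>i<d l. \<Sum>j<d (l - 1). gradG d L lam y W l i j * W l i j)\<^sup>2
      \<le> (\<Sum>l\<in>{1..L}. \<Sum>i<d l. \<Sum>j<d (l - 1). (gradG d L lam y W l i j)\<^sup>2) * sqnormW d L W"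
    unfolding sqnormW_def by (rule sum_layers_Cauchy_Schwarz) simp
  then show ?thesis
    unfolding gradnormG_def real_sqrt_mult[symmetric] by (rule real_le_rsqrt)
qed

text \<open>Only the second term of the minimum defining eps0 is needed.\<close>

lemma eps0_deep_le:
  assumes "3 \<le> L" "0 < lam" "0 \<le> y 1" "0 \<le> s" "s \<le> eps0 d L lam y"
  shows "y 1 * s ^ (L - 2) \<le> sqrt lam / 3"
proof (cases "y 1 = 0")
  case False
  define q where "q = sqrt lam / (3 * y 1)"
  have q0: "0 < q" unfolding q_def using False assms(2,3) by simp
  have "s \<le> q powr (1 / (real L - 2))"
    using assms False unfolding eps0_def q_def by (auto simp: min_def split: if_splits)
  then have "s ^ (L - 2) \<le> (q powr (1 / (real L - 2))) ^ (L - 2)"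
    using assms(4) by (intro power_mono) auto
  also have "\<dots> = q powr (1 / (real L - 2) * real (L - 2))"
    using q0 by (simp add: powr_realpow[symmetric] powr_powr)
  also have "1 / (real L - 2) * real (L - 2) = 1"
    using assms(1) by (simp add: of_nat_diff)
  finally have "y 1 * s ^ (L - 2) \<le> y 1 * q"
    using q0 assms(3) by (simp add: mult_left_mono)
  also have "\<dots> = sqrt lam / 3"
    unfolding q_def using False by simp
  finally show ?thesis .
qed (use assms(2) in simp)

lemma sum_layers_gradG_mult_W_ge:
  "2 * lam * sqnormW d L W - 2 * sqrt lam * (real L * (\<Sum>m<d L. \<Sum>n<d 0. Ymat d L y m n * chainW d W L m n))
    \<le> (\<Sum>l\<in>{1..L}. \<Sum>i<d l. \<Sum>j<d (l - 1). gradG d L lam y W l i j * W l i j)"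
proof -
  define T where "T = (\<Sum>m<d L. \<Sum>n<d 0. Ymat d L y m n * chainW d W L m n)"
  define X where "X = (\<Sum>m<d L. \<Sum>n<d 0. (chainW d W L m n - sqrt lam * Ymat d L y m n) * chainW d W L m n)"
  have "X = (\<Sum>m<d L. \<Sum>n<d 0. (chainW d W L m n)\<^sup>2) - sqrt lam * T"
    unfolding X_def T_def by (simp add: algebra_simps sum_subtractf sum_distrib_left power2_eq_square)
  then have "- sqrt lam * T \<le> X"
    by (simp add: sum_nonneg)
  then have "real L * (- sqrt lam * T) \<le> real L * X"
    by (rule mult_left_mono) simp
  then show ?thesis
    unfolding sum_layers_gradG_mult_W T_def[symmetric] X_def[symmetric] by (simp add: algebra_simps)
qed

lemma Ymat_chainW_cross_term_small:
  assumes "3 \<le> L" "0 < lam"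
    and mono: "\<forall>i j. 1 \<le> i \<longrightarrow> i \<le> j \<longrightarrow> j \<le> dmin d L \<longrightarrow> y j \<le> y i"
    and nonneg: "\<forall>i\<in>{1..dmin d L}. y i \<ge> 0" and "0 \<le> y 1"
    and small: "sqrt (sqnormW d L W) \<le> eps0 d L lam y"
  shows "2 * sqrt lam * (real L * (\<Sum>m<d L. \<Sum>n<d 0. Ymat d L y m n * chainW d W L m n))
    \<le> 2 / 3 * lam * sqnormW d L W"
proof -
  define S where "S = sqnormW d L W"
  define s where "s = sqrt S"
  have S0: "0 \<le> S" unfolding S_def sqnormW_eq_sum_frob_sq by (intro sum_nonneg frob_sq_nonneg)
  have s0: "0 \<le> s" and sS: "s\<^sup>2 = S" unfolding s_def using S0 by simp_all
  have "L = L - 2 + 2"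
    using assms(1) by simp
  then have "s ^ L = s ^ (L - 2 + 2)"
    by (rule arg_cong)
  then have sL: "s ^ L = s ^ (L - 2) * S"
    unfolding power_add sS .
  have "real L * (\<Sum>m<d L. \<Sum>n<d 0. Ymat d L y m n * chainW d W L m n) \<le> y 1 * s ^ L"
    using Ymat_chainW_cross_term_le[of L d y W] assms(1) mono nonneg \<open>0 \<le> y 1\<close>
    unfolding s_def S_def by simp
  also have "\<dots> = y 1 * s ^ (L - 2) * S"
    unfolding sL by simp
  also have "\<dots> \<le> sqrt lam / 3 * S"
    using eps0_deep_le[of L lam y s d] assms(1,2) \<open>0 \<le> y 1\<close> s0 small S0
    unfolding s_def S_def by (intro mult_right_mono) auto
  finally have "2 * sqrt lam * (real L * (\<Sum>m<d L. \<Sum>n<d 0. Ymat d L y m n * chainW d W L m n))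
      \<le> 2 * sqrt lam * (sqrt lam / 3 * S)"
    using assms(2) by (intro mult_left_mono) auto
  also have "\<dots> = 2 / 3 * lam * S"
    using assms(2) by simp
  finally show ?thesis
    unfolding S_def .
qed

lemma gradnormG_deep_ge:
  assumes "3 \<le> L" "0 < lam"
    and mono: "\<forall>i j. 1 \<le> i \<longrightarrow> i \<le> j \<longrightarrow> j \<le> dmin d L \<longrightarrow> y j \<le> y i"
    and nonneg: "\<forall>i\<in>{1..dmin d L}. y i \<ge> 0" and "0 \<le> y 1"
    and small: "sqrt (sqnormW d L W) \<le> eps0 d L lam y"
  shows "4 / 3 * lam * sqrt (sqnormW d L W) \<le> gradnormG d L lam y W"
proof -
  define S where "S = sqnormW d L W"
  define s where "s = sqrt S"
  have "0 \<le> S" unfolding S_def sqnormW_eq_sum_frob_sq by (intro sum_nonneg frob_sq_nonneg)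
  then have s0: "0 \<le> s" and sS: "s * s = S" unfolding s_def by simp_all
  have "4 / 3 * lam * S \<le> (\<Sum>l\<in>{1..L}. \<Sum>i<d l. \<Sum>j<d (l - 1). gradG d L lam y W l i j * W l i j)"
    using sum_layers_gradG_mult_W_ge[where lam = lam and d = d and L = L and y = y and W = W]
      Ymat_chainW_cross_term_small[OF assms]
    unfolding S_def by linarith
  also have "\<dots> \<le> gradnormG d L lam y W * s"
    unfolding s_def S_def by (rule sum_layers_gradG_mult_W_le)
  finally have "(4 / 3 * lam * s) * s \<le> gradnormG d L lam y W * s"
    unfolding sS[symmetric] by (simp add: mult.assoc)
  then show ?thesis
    using s0 gradnormG_nonneg[of d L lam y W] unfolding s_def S_def
    by (cases "sqrt (sqnormW d L W) = 0") auto
qed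

lemma deep_case:
  assumes "3 \<le> L" "0 < lam"
    and mono: "\<forall>i j. 1 \<le> i \<longrightarrow> i \<le> j \<longrightarrow> j \<le> dmin d L \<longrightarrow> y j \<le> y i"
    and nonneg: "\<forall>i\<in>{1..dmin d L}. y i \<ge> 0" and "0 \<le> y 1"
    and small: "sqrt (sqnormW d L W) \<le> eps0 d L lam y"
  shows "sqrt (sqnormW d L W) \<le> kappa0 d L lam y * gradnormG d L lam y W"
proof -
  have "sqrt (sqnormW d L W) \<le> 3 / (4 * lam) * gradnormG d L lam y W"
    using gradnormG_deep_ge[OF assms] assms(2) by (simp add: field_simps)
  also have "\<dots> \<le> 3 * sqrt (real L) / (2 * lam) * gradnormG d L lam y W"
  proof (rule mult_right_mono)
    have "3 / (4 * lam) \<le> 3 * 1 / (2 * lam)"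
      using assms(2) by (simp add: field_simps)
    also have "\<dots> \<le> 3 * sqrt (real L) / (2 * lam)"
      using assms by (intro divide_right_mono mult_left_mono) auto
    finally show "3 / (4 * lam) \<le> 3 * sqrt (real L) / (2 * lam)" .
  qed (rule gradnormG_nonneg)
  finally show ?thesis
    using assms(1) by (simp add: kappa0_def)
qed

section \<open>Depth two\<close>

lemma dchainW_two_first:
  "i < d 1 \<Longrightarrow> dchainW d W 1 i j 2 m n = (if n = j \<and> j < d 0 then W 2 m i else 0)"
proof -
  assume i: "i < d 1"
  have "dchainW d W 1 i j 2 m n = (\<Sum>p<d 1. W 2 m p * dchainW d W 1 i j 1 p n)"
    by (simp add: numeral_2_eq_2)
  also have "\<dots> = (\<Sum>p<d 1. if p = i then (if n = j \<and> j < d 0 then W 2 m i else 0) else 0)"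
    by (rule sum.cong) auto
  also have "\<dots> = (if n = j \<and> j < d 0 then W 2 m i else 0)"
    using i by simp
  finally show ?thesis .
qed

lemma dchainW_two_second:
  assumes "j < d 1" "n < d 0"
  shows "dchainW d W 2 i j 2 m n = (if m = i then W 1 j n else 0)"
proof -
  have "dchainW d W 2 i j 2 m n
      = (if m = i then chainW d W 1 j n else 0) + (\<Sum>p<d 1. W 2 m p * dchainW d W 2 i j 1 p n)"
    using assms(1) by (simp add: numeral_2_eq_2)
  also have "(\<Sum>p<d 1. W 2 m p * dchainW d W 2 i j 1 p n) = 0"
    by (simp add: dchainW_below)
  finally show ?thesis
    using chainW_one[of n d W j] assms(2) by simp
qed

lemma gradG_two_first:
  assumes "i < d 1" "j < d 0"
  shows "gradG d 2 lam y W 1 i j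
    = 2 * (lam * W 1 i j - sqrt lam * Ymat d 2 y j j * W 2 j i)
      + 2 * mat_mult (d 2) (\<lambda>i m. W 2 m i) (chainW d W 2) i j"
proof -
  define X where "X m n = chainW d W 2 m n - sqrt lam * Ymat d 2 y m n" for m n
  have "(\<Sum>n<d 0. X m n * dchainW d W 1 i j 2 m n) = (\<Sum>n<d 0. if n = j then X m j * W 2 m i else 0)" for m
    by (intro sum.cong refl) (subst dchainW_two_first, use assms in auto)
  then have "(\<Sum>n<d 0. X m n * dchainW d W 1 i j 2 m n) = X m j * W 2 m i" for m
    using assms(2) by simp
  then have "gradG d 2 lam y W 1 i j = 2 * (\<Sum>m<d 2. X m j * W 2 m i) + 2 * lam * W 1 i j"
    using gradG_eq[of 1 2 i d j lam y W] assms unfolding X_def by simp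
  also have "(\<Sum>m<d 2. X m j * W 2 m i)
      = mat_mult (d 2) (\<lambda>i m. W 2 m i) (chainW d W 2) i j - sqrt lam * (\<Sum>m<d 2. Ymat d 2 y m j * W 2 m i)"
    unfolding X_def mat_mult_def by (simp add: algebra_simps sum_subtractf sum_distrib_left)
  also have "(\<Sum>m<d 2. Ymat d 2 y m j * W 2 m i) = Ymat d 2 y j j * W 2 j i"
    by (rule sum_Ymat_col)
  finally show ?thesis by (simp add: algebra_simps)
qed

lemma gradG_two_second:
  assumes "i < d 2" "j < d 1"
  shows "gradG d 2 lam y W 2 i j
    = 2 * (lam * W 2 i j - sqrt lam * Ymat d 2 y i i * W 1 j i)
      + 2 * mat_mult (d 0) (chainW d W 2) (\<lambda>n j. W 1 j n) i j"
proof -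
  define X where "X m n = chainW d W 2 m n - sqrt lam * Ymat d 2 y m n" for m n
  have "X m n * dchainW d W 2 i j 2 m n = (if m = i then X i n * W 1 j n else 0)" if "n < d 0" for m n
    using that assms(2) by (simp add: dchainW_two_second)
  then have "(\<Sum>m<d 2. \<Sum>n<d 0. X m n * dchainW d W 2 i j 2 m n)
      = (\<Sum>m<d 2. if m = i then (\<Sum>n<d 0. X i n * W 1 j n) else 0)"
    by (intro sum.cong refl) auto
  also have "\<dots> = (\<Sum>n<d 0. X i n * W 1 j n)"
    using assms(1) by simp
  finally have "(\<Sum>m<d 2. \<Sum>n<d 0. X m n * dchainW d W 2 i j 2 m n) = (\<Sum>n<d 0. X i n * W 1 j n)" .
  then have "gradG d 2 lam y W 2 i j = 2 * (\<Sum>n<d 0. X i n * W 1 j n) + 2 * lam * W 2 i j"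
    using gradG_eq[of 2 2 i d j lam y W] assms unfolding X_def by simp
  also have "(\<Sum>n<d 0. X i n * W 1 j n)
      = mat_mult (d 0) (chainW d W 2) (\<lambda>n j. W 1 j n) i j - sqrt lam * (\<Sum>n<d 0. Ymat d 2 y i n * W 1 j n)"
    unfolding X_def mat_mult_def by (simp add: algebra_simps sum_subtractf sum_distrib_left)
  also have "(\<Sum>n<d 0. Ymat d 2 y i n * W 1 j n) = Ymat d 2 y i i * W 1 j i"
    by (rule sum_Ymat_row)
  finally show ?thesis by (simp add: algebra_simps)
qed

lemma chainW_two:
  assumes "n < d 0"
  shows "chainW d W 2 m n = mat_mult (d 1) (W 2) (W 1) m n"
proof -
  have "chainW d W 2 = mat_mult (d 1) (W 2) (chainW d W 1)"
    using chainW_Suc_eq_mat_mult[of d W 1] by (simp only: Suc_1)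
  then show ?thesis
    unfolding mat_mult_def using chainW_one[of n d W] assms by simp
qed

text \<open>
  For L = 2, grad G / 2 = (lam W_1 - sqrt lam W_2^T Y + W_2^T W_2 W_1, lam W_2 - sqrt lam Y W_1^T + W_2 W_1 W_1^T);
  grad_lin2 and grad_cub2 are its linear and cubic parts.
\<close>

definition grad_lin2 :: "(nat \<Rightarrow> nat) \<Rightarrow> real \<Rightarrow> (nat \<Rightarrow> real) \<Rightarrow> (nat \<Rightarrow> mat) \<Rightarrow> nat \<Rightarrow> mat" where
  "grad_lin2 d lam y W l i j =
     (if l = 1 then lam * W 1 i j - sqrt lam * Ymat d 2 y j j * W 2 j i
      else lam * W 2 i j - sqrt lam * Ymat d 2 y i i * W 1 j i)"

definition grad_cub2 :: "(nat \<Rightarrow> nat) \<Rightarrow> (nat \<Rightarrow> mat) \<Rightarrow> nat \<Rightarrow> mat" where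
  "grad_cub2 d W l i j =
     (if l = 1 then mat_mult (d 2) (\<lambda>i k. W 2 k i) (mat_mult (d 1) (W 2) (W 1)) i j
      else mat_mult (d 0) (mat_mult (d 1) (W 2) (W 1)) (\<lambda>k j. W 1 j k) i j)"

lemma gradG_two_layer_eq:
  assumes "l \<in> {1..2}" "i < d l" "j < d (l - 1)"
  shows "gradG d 2 lam y W l i j = 2 * (grad_lin2 d lam y W l i j + grad_cub2 d W l i j)"
proof -
  consider "l = 1" | "l = 2"
    using assms(1) by fastforce
  then show ?thesis
  proof cases
    case 1
    have "mat_mult (d 2) (\<lambda>i m. W 2 m i) (chainW d W 2) i j
        = mat_mult (d 2) (\<lambda>i k. W 2 k i) (mat_mult (d 1) (W 2) (W 1)) i j"
    proof -
      have "\<forall>k. chainW d W 2 k j = mat_mult (d 1) (W 2) (W 1) k j"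
        using assms(3) 1 by (simp add: chainW_two)
      then show ?thesis
        by (simp add: mat_mult_def)
    qed
    then show ?thesis
      using gradG_two_first[of i d j lam y W] assms 1 by (simp add: grad_lin2_def grad_cub2_def)
  next
    case 2
    have "mat_mult (d 0) (chainW d W 2) (\<lambda>n j. W 1 j n) i j
        = mat_mult (d 0) (mat_mult (d 1) (W 2) (W 1)) (\<lambda>k j. W 1 j k) i j"
      unfolding mat_mult_def by (intro sum.cong refl) (simp add: chainW_two mat_mult_def)
    then show ?thesis
      using gradG_two_second[of i d j lam y W] assms 2 by (simp add: grad_lin2_def grad_cub2_def)
  qed
qed

lemma sum_one_two: "(\<Sum>l\<in>{1..2::nat}. g l) = g 1 + g 2"
proof -
  have "{1..2::nat} = {1, 2}"
    by auto
  then show ?thesis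
    by simp
qed

lemma sqnormW_two: "sqnormW d 2 W = frob_sq (d 1) (d 0) (W 1) + frob_sq (d 2) (d 1) (W 2)"
  unfolding sqnormW_eq_sum_frob_sq sum_one_two by simp

lemma sum_sq_grad_lin2_ge:
  assumes "0 \<le> lam" "\<forall>n. 0 \<le> Ymat d 2 y n n" "\<forall>n. K\<^sup>2 \<le> (lam - sqrt lam * Ymat d 2 y n n)\<^sup>2"
  shows "K\<^sup>2 * sqnormW d 2 W \<le> (\<Sum>l\<in>{1..2}. \<Sum>i<d l. \<Sum>j<d (l - 1). (grad_lin2 d lam y W l i j)\<^sup>2)"
proof -
  define c where "c n = sqrt lam * Ymat d 2 y n n" for n
  have "K\<^sup>2 * (frob_sq (d 1) (d 0) (W 1) + frob_sq (d 2) (d 1) (W 2))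
      \<le> (\<Sum>i<d 1. \<Sum>j<d 0. (lam * W 1 i j - c j * W 2 j i)\<^sup>2)
        + (\<Sum>i<d 2. \<Sum>j<d 1. (lam * W 2 i j - c i * W 1 j i)\<^sup>2)"
  proof (rule linear_part_lower_bound[where M = "dmin d 2"])
    show "\<forall>j\<ge>dmin d 2. c j = 0"
      unfolding c_def using Ymat_diag_eq_0[of _ d 2 y] by simp
  qed (use assms in \<open>auto simp: c_def dmin_def\<close>)
  then show ?thesis
    unfolding sum_one_two grad_lin2_def c_def sqnormW_two by simp
qed

lemma sum_sq_grad_cub2_le:
  "4 * (\<Sum>l\<in>{1..2}. \<Sum>i<d l. \<Sum>j<d (l - 1). (grad_cub2 d W l i j)\<^sup>2) \<le> sqnormW d 2 W ^ 3"
  using cubic_part_upper_bound[where A = "W 1" and B = "W 2" and m = "d 2" and n = "d 0" and p = "d 1"]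
  unfolding sum_one_two sqnormW_two grad_cub2_def frob_sq_def by simp

lemma gradnormG_two_layer_ge:
  assumes "0 \<le> lam" "0 \<le> K" "\<forall>n. 0 \<le> Ymat d 2 y n n"
    "\<forall>n. K\<^sup>2 \<le> (lam - sqrt lam * Ymat d 2 y n n)\<^sup>2"
  shows "2 * K * sqrt (sqnormW d 2 W) - sqrt (sqnormW d 2 W) ^ 3 \<le> gradnormG d 2 lam y W"
proof -
  define S where "S = sqnormW d 2 W"
  define LIN where "LIN = (\<Sum>l\<in>{1..2}. \<Sum>i<d l. \<Sum>j<d (l - 1). (grad_lin2 d lam y W l i j)\<^sup>2)"
  define CUB where "CUB = (\<Sum>l\<in>{1..2}. \<Sum>i<d l. \<Sum>j<d (l - 1). (grad_cub2 d W l i j)\<^sup>2)"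
  define GR where "GR = (\<Sum>l\<in>{1..2}. \<Sum>i<d l. \<Sum>j<d (l - 1). (grad_lin2 d lam y W l i j + grad_cub2 d W l i j)\<^sup>2)"
  have S0: "0 \<le> S" unfolding S_def sqnormW_eq_sum_frob_sq by (intro sum_nonneg frob_sq_nonneg)
  have "(gradG d 2 lam y W l i j)\<^sup>2 = 4 * (grad_lin2 d lam y W l i j + grad_cub2 d W l i j)\<^sup>2"
    if "l \<in> {1..2}" "i < d l" "j < d (l - 1)" for l i j
    unfolding gradG_two_layer_eq[OF that] power_mult_distrib by simp
  then have "gradnormG d 2 lam y W = sqrt (4 * GR)"
    unfolding gradnormG_def GR_def sum_distrib_left by (intro arg_cong[where f = sqrt] sum.cong refl) auto
  then have gn: "gradnormG d 2 lam y W = 2 * sqrt GR"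
    by (simp add: real_sqrt_mult)
  have "sqrt LIN \<le> sqrt GR + sqrt CUB"
    using sum_layers_sqrt_add_le[where d = d and A = "{1..2}"
        and a = "\<lambda>l i j. grad_lin2 d lam y W l i j + grad_cub2 d W l i j" and b = "\<lambda>l i j. - grad_cub2 d W l i j"]
    unfolding LIN_def GR_def CUB_def by simp
  moreover have "K * sqrt S \<le> sqrt LIN"
  proof -
    have "sqrt (K\<^sup>2 * S) \<le> sqrt LIN"
      using sum_sq_grad_lin2_ge[OF assms(1,3,4), of W] unfolding LIN_def S_def by simp
    then show ?thesis
      using assms(2) by (simp add: real_sqrt_mult)
  qed
  moreover have "2 * sqrt CUB \<le> sqrt S ^ 3"
  proof -
    have "sqrt (4 * CUB) \<le> sqrt (S ^ 3)"
      using sum_sq_grad_cub2_le[of d W] unfolding CUB_def S_def by simp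
    then show ?thesis
      using S0 by (simp add: real_sqrt_mult real_sqrt_power)
  qed
  ultimately show ?thesis
    unfolding gn S_def by linarith
qed

lemma muval_bounds:
  assumes "0 < lam"
    and mono: "\<forall>i j. 1 \<le> i \<longrightarrow> i \<le> j \<longrightarrow> j \<le> dmin d L \<longrightarrow> y j \<le> y i"
  shows "0 \<le> muval d L lam y" "muval d L lam y \<le> lam"
    "\<And>k. 1 \<le> k \<Longrightarrow> k \<le> dmin d L \<Longrightarrow> 0 < y k \<Longrightarrow> muval d L lam y \<le> \<bar>lam - (y k)\<^sup>2\<bar>"
proof -
  define R where "R = rY d L y"
  define f where "f i = \<bar>lam - (y i)\<^sup>2\<bar>" for i
  have mu: "muval d L lam y = (if R = 0 then lam else min (Min (f ` {1..R})) lam)"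
    unfolding muval_def R_def f_def by simp
  show "muval d L lam y \<le> lam"
    unfolding mu by auto
  show "0 \<le> muval d L lam y"
  proof (cases "R = 0")
    case False
    then have "Min (f ` {1..R}) \<in> f ` {1..R}"
      by (intro Min_in) auto
    then show ?thesis
      unfolding mu f_def using assms(1) by auto
  qed (use assms(1) mu in simp)
  fix k
  assume k: "1 \<le> k" "k \<le> dmin d L" "0 < y k"
  have "{1..k} \<subseteq> {i \<in> {1..dmin d L}. 0 < y i}"
    using k mono by (auto intro: less_le_trans)
  then have "k \<le> R"
    unfolding R_def rY_def using card_mono[of "{i \<in> {1..dmin d L}. 0 < y i}" "{1..k}"] by simp
  then have "R \<noteq> 0" and "Min (f ` {1..R}) \<le> f k"
    using k by (auto intro: Min_le)
  then show "muval d L lam y \<le> \<bar>lam - (y k)\<^sup>2\<bar>"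
    unfolding mu f_def by simp
qed

lemma mu_bound_sq:
  fixes lam mu t y1 :: real
  assumes lam: "0 < lam" and t: "0 \<le> t" "t \<le> y1" and mu: "0 \<le> mu" "mu \<le> lam"
    and gap: "0 < t \<Longrightarrow> mu \<le> \<bar>lam - t\<^sup>2\<bar>"
  shows "(sqrt lam * mu / (sqrt lam + y1))\<^sup>2 \<le> (lam - sqrt lam * t)\<^sup>2"
proof -
  define r where "r = sqrt lam"
  have r: "0 < r" "r\<^sup>2 = lam" unfolding r_def using lam by auto
  have den: "0 < r + y1" using r t by simp
  have "r * mu / (r + y1) \<le> \<bar>lam - r * t\<bar>"
  proof (cases "t = 0")
    case True
    have "r * mu \<le> r * lam"
      using mu r by simp
    also have "\<dots> \<le> lam * (r + y1)"
      using t lam by (simp add: algebra_simps)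
    finally have "r * mu \<le> lam * (r + y1)" .
    then show ?thesis
      using True den lam by (simp add: divide_le_eq)
  next
    case False
    have "lam - t\<^sup>2 = (r - t) * (r + t)"
      by (simp add: r(2)[symmetric] power2_eq_square algebra_simps)
    then have "mu \<le> \<bar>r - t\<bar> * (r + t)"
      using gap False t r by (simp add: abs_mult)
    also have "\<dots> \<le> \<bar>r - t\<bar> * (r + y1)"
      using t by (intro mult_left_mono) auto
    finally have "r * mu / (r + y1) \<le> r * \<bar>r - t\<bar>"
      using den r by (simp add: divide_le_eq mult.assoc mult_left_mono)
    also have "r * \<bar>r - t\<bar> = \<bar>r * (r - t)\<bar>"
      using r by (simp add: abs_mult)
    also have "r * (r - t) = lam - r * t"
      using r by (simp add: power2_eq_square right_diff_distrib)
    finally show ?thesis .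
  qed
  then have "(r * mu / (r + y1))\<^sup>2 \<le> \<bar>lam - r * t\<bar>\<^sup>2"
    using r den mu by (intro power_mono) auto
  then show ?thesis
    unfolding r_def by simp
qed

lemma mu_bound_Ymat:
  assumes "0 < lam"
    and mono: "\<forall>i j. 1 \<le> i \<longrightarrow> i \<le> j \<longrightarrow> j \<le> dmin d L \<longrightarrow> y j \<le> y i"
    and nonneg: "\<forall>i\<in>{1..dmin d L}. y i \<ge> 0" and "0 \<le> y 1"
  shows "(sqrt lam * muval d L lam y / (sqrt lam + y 1))\<^sup>2 \<le> (lam - sqrt lam * Ymat d L y n n)\<^sup>2"
proof (rule mu_bound_sq)
  show "0 \<le> Ymat d L y n n" "Ymat d L y n n \<le> y 1"
    using Ymat_diag_bounds[OF mono nonneg \<open>0 \<le> y 1\<close>] by auto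
  show "0 \<le> muval d L lam y" "muval d L lam y \<le> lam"
    using muval_bounds[OF assms(1) mono] by auto
  assume "0 < Ymat d L y n n"
  then have "n < dmin d L" and "Ymat d L y n n = y (Suc n)"
    by (auto simp: Ymat_def split: if_splits)
  then show "muval d L lam y \<le> \<bar>lam - (Ymat d L y n n)\<^sup>2\<bar>"
    using muval_bounds(3)[OF assms(1) mono, of "Suc n"] \<open>0 < Ymat d L y n n\<close> by simp
qed (use assms(1) in simp)

text \<open>A lower bound for the smallest singular value of the linear part grad_lin2.\<close>

definition linear_gap :: "(nat \<Rightarrow> nat) \<Rightarrow> real \<Rightarrow> (nat \<Rightarrow> real) \<Rightarrow> real" where
  "linear_gap d lam y = sqrt lam * muval d 2 lam y / (sqrt lam + y 1)"

lemma eps0_two: "eps0 d 2 lam y = sqrt (linear_gap d lam y / 2)"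
  unfolding eps0_def linear_gap_def by (simp add: field_simps)

lemma kappa0_two: "kappa0 d 2 lam y = 2 / linear_gap d lam y"
  unfolding kappa0_def linear_gap_def by simp

lemma gradnormG_shallow_ge:
  assumes "0 < lam"
    and mono: "\<forall>i j. 1 \<le> i \<longrightarrow> i \<le> j \<longrightarrow> j \<le> dmin d 2 \<longrightarrow> y j \<le> y i"
    and nonneg: "\<forall>i\<in>{1..dmin d 2}. y i \<ge> 0" and "0 \<le> y 1"
    and small: "sqnormW d 2 W \<le> linear_gap d lam y / 2"
  shows "3 / 2 * linear_gap d lam y * sqrt (sqnormW d 2 W) \<le> gradnormG d 2 lam y W"
proof -
  define K where "K = linear_gap d lam y"
  define s where "s = sqrt (sqnormW d 2 W)"
  have K0: "0 \<le> K"
    unfolding K_def linear_gap_def using muval_bounds[OF assms(1) mono] assms(1,4) by simp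
  have s0: "0 \<le> s" and sS: "s * s = sqnormW d 2 W"
    unfolding s_def sqnormW_eq_sum_frob_sq by (simp_all add: sum_nonneg frob_sq_nonneg)
  have "2 * K * s - s ^ 3 \<le> gradnormG d 2 lam y W"
    unfolding s_def using assms(1) K0 Ymat_diag_bounds[OF mono nonneg \<open>0 \<le> y 1\<close>]
      mu_bound_Ymat[OF assms(1) mono nonneg \<open>0 \<le> y 1\<close>]
    by (intro gradnormG_two_layer_ge) (auto simp: K_def linear_gap_def)
  moreover have "s * (s * s) \<le> s * (K / 2)"
    using small s0 unfolding sS K_def by (rule mult_left_mono)
  ultimately show ?thesis
    unfolding K_def[symmetric] s_def[symmetric] by (simp add: power3_eq_cube algebra_simps)
qed

lemma shallow_case:
  assumes "0 < lam"
    and mono: "\<forall>i j. 1 \<le> i \<longrightarrow> i \<le> j \<longrightarrow> j \<le> dmin d 2 \<longrightarrow> y j \<le> y i"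
    and nonneg: "\<forall>i\<in>{1..dmin d 2}. y i \<ge> 0" and "0 \<le> y 1"
    and small: "sqrt (sqnormW d 2 W) \<le> eps0 d 2 lam y"
  shows "sqrt (sqnormW d 2 W) \<le> kappa0 d 2 lam y * gradnormG d 2 lam y W"
proof -
  define K where "K = linear_gap d lam y"
  define s where "s = sqrt (sqnormW d 2 W)"
  have S0: "0 \<le> sqnormW d 2 W"
    unfolding sqnormW_eq_sum_frob_sq by (simp add: sum_nonneg frob_sq_nonneg)
  have "sqnormW d 2 W \<le> K / 2"
    using small unfolding eps0_two K_def by (simp add: real_sqrt_le_iff)
  then have gn: "3 / 2 * K * s \<le> gradnormG d 2 lam y W"
    unfolding s_def K_def using gradnormG_shallow_ge[OF assms(1-4)] by simp
  show ?thesis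
  proof (cases "K = 0")
    case True
    then show ?thesis
      using \<open>sqnormW d 2 W \<le> K / 2\<close> S0 unfolding kappa0_two K_def[symmetric] by simp
  next
    case False
    then have K: "0 < K"
      using \<open>sqnormW d 2 W \<le> K / 2\<close> S0 by simp
    have "2 / K * (3 / 2 * K * s) \<le> 2 / K * gradnormG d 2 lam y W"
      using gn K by (intro mult_left_mono) auto
    then have "3 * s \<le> kappa0 d 2 lam y * gradnormG d 2 lam y W"
      using K unfolding kappa0_two K_def[symmetric] by simp
    then show ?thesis
      using real_sqrt_ge_zero[OF S0] unfolding s_def by linarith
  qed
qed

text \<open>
  Neither the width condition nor the exclusion of critical values of lam is needed: for L = 2
  a vanishing mu gives eps0 = 0, and for L \<ge> 3 neither eps0 nor kappa0 involves mu.
\<close>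

theorem proposition3p4:
  fixes L :: nat and d :: "nat \<Rightarrow> nat" and lam :: real and y :: "nat \<Rightarrow> real"
    and W :: "nat \<Rightarrow> nat \<Rightarrow> nat \<Rightarrow> real"
  assumes hL: "L \<ge> 2"
    and hd: "\<forall>l\<le>L. d l > 0"
    and hlam: "lam > 0"
    and hy_mono: "\<forall>i j. 1 \<le> i \<longrightarrow> i \<le> j \<longrightarrow> j \<le> dmin d L \<longrightarrow> y j \<le> y i"
    and hy_nonneg: "\<forall>i\<in>{1..dmin d L}. y i \<ge> 0"
    and hwidth: "\<forall>l\<in>{1..L-1}. d l \<ge> dmin d L"
    and hcrit2: "L = 2 \<longrightarrow> (\<forall>i\<in>{1..rY d L y}. lam \<noteq> (y i)\<^sup>2)"
    and hcrit3: "L \<ge> 3 \<longrightarrow> (\<forall>i\<in>{1..rY d L y}. lam \<noteq> crit L (y i))"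
    and hW: "sqrt (sqnormW d L W) \<le> eps0 d L lam y"
  shows "sqrt (sqnormW d L W) \<le> kappa0 d L lam y * gradnormG d L lam y W"
proof -
  have "1 \<le> dmin d L"
    using hd[rule_format, of 0] hd[rule_format, of L] by (simp add: dmin_def)
  then have y1: "0 \<le> y 1"
    using hy_nonneg by simp
  show ?thesis
  proof (cases "L = 2")
    case True
    then show ?thesis
      using shallow_case[of lam d y W] hlam hy_mono hy_nonneg y1 hW by simp
  next
    case False
    then show ?thesis
      using deep_case[of L lam d y W] hL hlam hy_mono hy_nonneg y1 hW by simp
  qed
qed

end
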